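(* Let $f:\mathbb{R}^d\to\mathbb{R}$ satisfy the Standing Assumptions with constants $0<\mu\le L$ and $M>0$, and let $\{x_t\},\{G_t\},\{J_t\}$ be generated by General Sharpened-BFGS from an initial point $x_0$ with $$\lambda_0\le\frac{C_0\mu}{ML},\qquad C_0=\frac14\ln\frac32,$$ assuming $\nabla f(x_t)\ne0$ for all $t$ considered. Then for all $t\ge0$, $$\theta(J_t,G_t,x_{t+1}-x_t)\le1-\frac{2\mu}{3L}\qquad\text{and}\qquad \lambda_t\le\left(1-\frac{\mu}{2L}\right)^t\lambda_0,$$ where $\lambda_t:=\lambda_f(x_t)$.
   Context: Standing Assumptions: $f$ is twice differentiable, $\mu$-strongly convex and has $L$-Lipschitz gradient, and is strongly self-concordant with constant $M>0$: for all $x,y,z,w\in\mathbb{R}^d$, $\nabla^2f(y)-\nabla^2f(x)\preceq M\|y-x\|_z\nabla^2f(w)$, where $\|h\|_z:=\sqrt{h^\top\nabla^2f(z)h}$. Newton decrement: $\lambda_f(x):=\sqrt{\nabla f(x)^\top\nabla^2f(x)^{-1}\nabla f(x)}$. $\theta(A,G,u):=\left(\frac{u^\top (G-A)A^{-1}(G-A)u}{u^\top GA^{-1}Gu}\right)^{1/2}$. For symmetric positive definite $A,G$ and $u\ne0$, $\mathrm{BFGS}(A,G,u):=G-\frac{Guu^\top G}{u^\top Gu}+\frac{Auu^\top A}{u^\top Au}$, and $\bar u(A,G):=\arg\max_{u\in\{e_1,\dots,e_d\}}\frac{u^\top Gu}{u^\top Au}$ (ties broken arbitrarily). General Sharpened-BFGS: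 set $G_0=LI$; for $t=0,1,2,\dots$: $x_{t+1}=x_t-G_t^{-1}\nabla f(x_t)$; $s_t=x_{t+1}-x_t$; $J_t=\int_0^1\nabla^2f(x_t+\tau s_t)\,d\tau$; $\bar G_t=\mathrm{BFGS}(J_t,G_t,s_t)$; $r_t=\|s_t\|_{x_t}$; $\hat G_t=(1+Mr_t/2)^2\bar G_t$; $\bar u=\bar u(\nabla^2f(x_{t+1}),\hat G_t)$; $G_{t+1}=\mathrm{BFGS}(\nabla^2f(x_{t+1}),\hat G_t,\bar u)$. *)

theory Defs
  imports "HOL-Analysis.Analysis"
begin

definition strongly_convex :: "real \<Rightarrow> ('a::real_normed_vector \<Rightarrow> real) \<Rightarrow> bool" where
  "strongly_convex mu f \<longleftrightarrow>
     (\<forall>x y. \<forall>t::real. 0 \<le> t \<and> t \<le> 1 \<longrightarrow>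
        f (t *\<^sub>R x + (1 - t) *\<^sub>R y)
          \<le> t * f x + (1 - t) * f y - mu / 2 * t * (1 - t) * (norm (x - y))\<^sup>2)"

definition loewner_le :: "real^'n^'n \<Rightarrow> real^'n^'n \<Rightarrow> bool" where
  "loewner_le A B \<longleftrightarrow> (\<forall>h. h \<bullet> (A *v h) \<le> h \<bullet> (B *v h))"

definition local_norm :: "(real^'n \<Rightarrow> real^'n^'n) \<Rightarrow> real^'n \<Rightarrow> real^'n \<Rightarrow> real" where
  "local_norm H z h = sqrt (h \<bullet> (H z *v h))"

definition strongly_self_concordant :: "real \<Rightarrow> (real^'n \<Rightarrow> real^'n^'n) \<Rightarrow> bool" where
  "strongly_self_concordant M H \<longleftrightarrow>
     (\<forall>x y z w. loewner_le (H y - H x) ((M * local_norm H z (y - x)) *\<^sub>R H w))"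

definition newton_decrement :: "(real^'n \<Rightarrow> real^'n) \<Rightarrow> (real^'n \<Rightarrow> real^'n^'n) \<Rightarrow> real^'n \<Rightarrow> real" where
  "newton_decrement g H x = sqrt (g x \<bullet> (matrix_inv (H x) *v g x))"

definition outer :: "real^'n \<Rightarrow> real^'n \<Rightarrow> real^'n^'n" where
  "outer u v = (\<chi> i j. u $ i * v $ j)"

definition theta :: "real^'n^'n \<Rightarrow> real^'n^'n \<Rightarrow> real^'n \<Rightarrow> real" where
  "theta A G u = sqrt ((u \<bullet> (((G - A) ** matrix_inv A ** (G - A)) *v u))
                      / (u \<bullet> ((G ** matrix_inv A ** G) *v u)))"

definition BFGS :: "real^'n^'n \<Rightarrow> real^'n^'n \<Rightarrow> real^'n \<Rightarrow> real^'n^'n" where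
  "BFGS A G u = G - (1 / (u \<bullet> (G *v u))) *\<^sub>R (G ** outer u u ** G)
                  + (1 / (u \<bullet> (A *v u))) *\<^sub>R (A ** outer u u ** A)"

definition greedy_dir :: "real^'n^'n \<Rightarrow> real^'n^'n \<Rightarrow> real^'n \<Rightarrow> bool" where
  "greedy_dir A G u \<longleftrightarrow> (\<exists>i. u = axis i 1) \<and>
     (\<forall>j. (axis j 1 \<bullet> (G *v axis j 1)) / (axis j 1 \<bullet> (A *v axis j 1))
          \<le> (u \<bullet> (G *v u)) / (u \<bullet> (A *v u)))"

end

theory Submission
  imports Defs
begin

text \<open>Along the iteration, \<open>G t\<close> stays in a Loewner sandwich \<open>H (x t) \<le> G t \<le> E\<^sub>t H (x t)\<close>.
  Strong self-concordance makes the averaged Hessian \<open>J t\<close> and the Hessians at \<open>x t\<close> and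
  \<open>x (t+1)\<close> mutually comparable up to the factor \<open>1 + M r\<^sub>t / 2\<close>, and \<open>r\<^sub>t\<close> is at most the
  Newton decrement \<open>\<lambda>\<^sub>t\<close>. A BFGS update towards a matrix preserves a sandwich around that
  matrix, so after sharpening by \<open>(1 + M r\<^sub>t / 2)\<^sup>2\<close> and the greedy update the sandwich holds
  at \<open>t + 1\<close> with \<open>E\<^sub>t\<^sub>+\<^sub>1 = E\<^sub>t (1 + M r\<^sub>t / 2)\<^sup>4\<close>. While \<open>E\<^sub>t \<le> 3 L / (2 mu)\<close>, \<open>J t\<close> and \<open>G t\<close>
  agree up to factors \<open>1 \<plusminus> c\<close> with \<open>c = 1 - 2 mu / (3 L)\<close>; this bounds \<open>theta\<close> by \<open>c\<close> and
  makes the decrement contract by \<open>1 - mu / (2 L)\<close>. The geometric decay of \<open>\<lambda>\<^sub>t\<close> keeps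
  \<open>E\<^sub>t \<le> (L / mu) exp (4 M \<lambda>\<^sub>0 L / mu) \<le> 3 L / (2 mu)\<close>, which closes the induction.\<close>

section \<open>Quadratic forms and positive definite matrices\<close>

definition qform :: "real^'n^'n \<Rightarrow> real^'n \<Rightarrow> real" where
  "qform A v = v \<bullet> (A *v v)"

definition sym_matrix :: "real^'n^'n \<Rightarrow> bool" where
  "sym_matrix A \<longleftrightarrow> (\<forall>x y. x \<bullet> (A *v y) = y \<bullet> (A *v x))"

definition pos_def :: "real^'n^'n \<Rightarrow> bool" where
  "pos_def A \<longleftrightarrow> sym_matrix A \<and> (\<forall>v. v \<noteq> 0 \<longrightarrow> 0 < qform A v)"

lemma qform_diff: "qform (A - B) v = qform A v - qform B v"
  by (simp add: qform_def matrix_vector_mult_diff_rdistrib inner_diff_right)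

lemma qform_scaleR: "qform (c *\<^sub>R A) v = c * qform A v"
  by (simp add: qform_def scaleR_matrix_vector_assoc[symmetric])

lemma qform_mat_1: "qform (mat 1) v = (norm v)\<^sup>2"
  by (simp add: qform_def power2_norm_eq_inner)

lemma qform_scaleR_vec: "qform A (c *\<^sub>R v) = c\<^sup>2 * qform A v"
  by (simp add: qform_def matrix_vector_mult_scaleR power2_eq_square)

lemma qform_uminus_vec: "qform A (- v) = qform A v"
  using qform_scaleR_vec[of A "-1" v] by simp

lemma loewner_le_iff_qform: "loewner_le A B \<longleftrightarrow> (\<forall>h. qform A h \<le> qform B h)"
  by (simp add: loewner_le_def qform_def)

lemma sym_matrix_diff: "sym_matrix A \<Longrightarrow> sym_matrix B \<Longrightarrow> sym_matrix (A - B)"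
  by (simp add: sym_matrix_def matrix_vector_mult_diff_rdistrib inner_diff_right)

lemma sym_matrix_scaleR: "sym_matrix A \<Longrightarrow> sym_matrix (c *\<^sub>R A)"
  by (simp add: sym_matrix_def scaleR_matrix_vector_assoc[symmetric])

lemma sym_matrix_mat_1: "sym_matrix (mat 1)"
  by (simp add: sym_matrix_def inner_commute)

lemma qform_add_scaleR:
  assumes "sym_matrix A"
  shows "qform A (x + t *\<^sub>R y) = qform A x + 2 * t * (x \<bullet> (A *v y)) + t\<^sup>2 * qform A y"
proof -
  have "y \<bullet> (A *v x) = x \<bullet> (A *v y)" using assms by (simp add: sym_matrix_def)
  then show ?thesis
    by (simp add: qform_def matrix_vector_right_distrib matrix_vector_mult_scaleR
        inner_add_left inner_add_right algebra_simps power2_eq_square)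
qed

lemma qform_diff_vec:
  assumes "sym_matrix A"
  shows "qform A (x - y) = qform A x - 2 * (x \<bullet> (A *v y)) + qform A y"
  using qform_add_scaleR[OF assms, of x "-1" y] by simp

lemma inner_mult_vec_polarization:
  assumes "sym_matrix A"
  shows "a \<bullet> (A *v b) = (qform A (a + b) - qform A (a - b)) / 4"
  using qform_add_scaleR[OF assms, of a 1 b] qform_add_scaleR[OF assms, of a "-1" b] by simp

lemma qform_Cauchy_Schwarz:
  assumes "sym_matrix A" and psd: "\<And>v. 0 \<le> qform A v"
  shows "(x \<bullet> (A *v y))\<^sup>2 \<le> qform A x * qform A y"
proof -
  define b where "b = x \<bullet> (A *v y)"
  have q: "0 \<le> qform A x + 2 * t * b + t\<^sup>2 * qform A y" for t
    using psd qform_add_scaleR[OF assms(1)] b_def by metis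
  show ?thesis
  proof (cases "qform A y = 0")
    case True
    have "b = 0"
    proof (rule ccontr)
      assume "b \<noteq> 0"
      with True q[of "- (qform A x + 1) / (2 * b)"] show False by (simp add: field_simps)
    qed
    then show ?thesis using True b_def by simp
  next
    case False
    then have pos: "0 < qform A y" using psd[of y] by simp
    have "0 \<le> qform A x + 2 * (- b / qform A y) * b + (- b / qform A y)\<^sup>2 * qform A y"
      by (rule q)
    then have "b\<^sup>2 \<le> qform A x * qform A y" using pos by (simp add: field_simps power2_eq_square)
    then show ?thesis using b_def by simp
  qed
qed

lemma pos_def_qform_nonneg: "pos_def A \<Longrightarrow> 0 \<le> qform A v"
  unfolding pos_def_def by (cases "v = 0") (auto simp: qform_def less_imp_le)

lemma pos_def_if_dominates:
  assumes "pos_def A" "sym_matrix B" "0 < c" "\<And>h. c * qform A h \<le> qform B h"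
  shows "pos_def B"
  using assms unfolding pos_def_def by (metis mult_pos_pos order_less_le_trans)

lemma pos_def_invertible:
  assumes "pos_def A" shows "invertible A"
proof -
  have "\<forall>x. A *v x = 0 \<longrightarrow> x = 0"
    using assms unfolding pos_def_def qform_def by fastforce
  then show ?thesis
    using matrix_left_invertible_ker invertible_left_inverse by blast
qed

lemma matrix_inv_mult_vec:
  assumes "invertible A"
  shows "A *v (matrix_inv A *v v) = v" "matrix_inv A *v (A *v v) = v"
proof -
  have "A ** matrix_inv A = mat 1" "matrix_inv A ** A = mat 1"
    using assms unfolding invertible_def matrix_inv_def by (metis (mono_tags, lifting) someI)+
  then show "A *v (matrix_inv A *v v) = v" "matrix_inv A *v (A *v v) = v"
    by (simp_all add: matrix_vector_mul_assoc)
qed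

lemma qform_matrix_inv:
  assumes "pos_def A" shows "qform (matrix_inv A) v = qform A (matrix_inv A *v v)"
  using matrix_inv_mult_vec[OF pos_def_invertible[OF assms]] by (simp add: qform_def inner_commute)

lemma qform_matrix_inv_mult:
  assumes "pos_def A" shows "qform (matrix_inv A) (A *v z) = qform A z"
  using matrix_inv_mult_vec[OF pos_def_invertible[OF assms]] by (simp add: qform_def inner_commute)

lemma pos_def_matrix_inv:
  assumes "pos_def A" shows "pos_def (matrix_inv A)"
proof -
  note inv = matrix_inv_mult_vec[OF pos_def_invertible[OF assms]]
  have "sym_matrix A" using assms pos_def_def by blast
  then have "sym_matrix (matrix_inv A)"
    unfolding sym_matrix_def by (metis inv inner_commute)
  moreover have "0 < qform (matrix_inv A) v" if "v \<noteq> 0" for v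
  proof -
    have "matrix_inv A *v v \<noteq> 0" using that inv by (metis matrix_vector_mult_0_right)
    then show ?thesis using assms unfolding qform_matrix_inv[OF assms] pos_def_def by blast
  qed
  ultimately show ?thesis unfolding pos_def_def by blast
qed

lemma qform_matrix_inv_antimono:
  assumes A: "pos_def A" and B: "pos_def B" and c: "0 < c" and le: "\<And>h. qform A h \<le> c * qform B h"
  shows "qform (matrix_inv B) v \<le> c * qform (matrix_inv A) v"
proof -
  define w where "w = matrix_inv B *v v"
  define z where "z = matrix_inv A *v v"
  define X where "X = qform (matrix_inv B) v"
  define Y where "Y = qform (matrix_inv A) v"
  have X0: "0 \<le> X" and Y0: "0 \<le> Y"
    unfolding X_def Y_def using pos_def_qform_nonneg pos_def_matrix_inv A B by blast+
  have "X = w \<bullet> (A *v z)"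
    unfolding X_def w_def z_def qform_def
    using matrix_inv_mult_vec(1)[OF pos_def_invertible[OF A]] by (simp add: inner_commute)
  then have "X\<^sup>2 \<le> qform A w * qform A z"
    using qform_Cauchy_Schwarz A pos_def_def pos_def_qform_nonneg by metis
  also have "qform A z = Y" unfolding Y_def z_def using qform_matrix_inv[OF A] by simp
  also have "qform A w * Y \<le> c * qform B w * Y"
    using le[of w] Y0 by (simp add: mult_right_mono)
  also have "qform B w = X" unfolding X_def w_def using qform_matrix_inv[OF B] by simp
  finally have "X * X \<le> X * (c * Y)" by (simp add: power2_eq_square algebra_simps)
  then have "X \<le> c * Y" using X0 c Y0 by (cases "X = 0") auto
  then show ?thesis using X_def Y_def by simp
qed

lemma qform_mult_matrix_inv_le:
  assumes A: "pos_def A" and G: "pos_def G" and le: "\<And>h. qform A h \<le> qform G h"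
  shows "qform A (matrix_inv G *v v) \<le> qform (matrix_inv A) v"
proof -
  have "qform A (matrix_inv G *v v) \<le> qform G (matrix_inv G *v v)" by (rule le)
  also have "\<dots> = qform (matrix_inv G) v" using qform_matrix_inv[OF G] by simp
  also have "\<dots> \<le> 1 * qform (matrix_inv A) v"
    by (rule qform_matrix_inv_antimono[OF A G]) (use le in auto)
  finally show ?thesis by simp
qed

section \<open>The BFGS update\<close>

lemma outer_mult_vec: "outer u u *v w = (u \<bullet> w) *\<^sub>R u"
  by (simp add: outer_def matrix_vector_mult_def vec_eq_iff inner_vec_def sum_distrib_left
      mult.commute mult.left_commute)

lemma BFGS_mult_vec:
  "BFGS A G u *v v = G *v v - ((u \<bullet> (G *v v)) / qform G u) *\<^sub>R (G *v u)
     + ((u \<bullet> (A *v v)) / qform A u) *\<^sub>R (A *v u)"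
  by (simp add: BFGS_def qform_def matrix_vector_mult_add_rdistrib matrix_vector_mult_diff_rdistrib
      scaleR_matrix_vector_assoc[symmetric] matrix_vector_mul_assoc[symmetric] outer_mult_vec
      matrix_vector_mult_scaleR)

lemma sym_matrix_BFGS:
  assumes "sym_matrix A" "sym_matrix G" shows "sym_matrix (BFGS A G u)"
  using assms unfolding sym_matrix_def BFGS_mult_vec
  by (simp add: inner_add_right inner_diff_right) (metis mult.commute)

text \<open>\<open>qform_perp X u v\<close> is the minimum of \<open>a \<mapsto> qform X (v - a *\<^sub>R u)\<close>.\<close>

definition qform_perp :: "real^'n^'n \<Rightarrow> real^'n \<Rightarrow> real^'n \<Rightarrow> real" where
  "qform_perp X u v = qform X v - (u \<bullet> (X *v v))\<^sup>2 / qform X u"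

lemma qform_BFGS:
  assumes "sym_matrix A" "sym_matrix G"
  shows "qform (BFGS A G u) v = qform_perp G u v + (u \<bullet> (A *v v))\<^sup>2 / qform A u"
proof -
  have "v \<bullet> (G *v u) = u \<bullet> (G *v v)" "v \<bullet> (A *v u) = u \<bullet> (A *v v)"
    using assms unfolding sym_matrix_def by metis+
  then show ?thesis
    by (simp add: qform_def qform_perp_def BFGS_mult_vec inner_add_right inner_diff_right
        power2_eq_square)
qed

lemma qform_perp_le:
  assumes "sym_matrix X" "0 < qform X u"
  shows "qform_perp X u v \<le> qform X (v - a *\<^sub>R u)"
proof -
  define b where "b = u \<bullet> (X *v v)"
  define c where "c = qform X u"
  have "v \<bullet> (X *v u) = b" using assms(1) unfolding sym_matrix_def b_def by metis
  then have e: "qform X (v - a *\<^sub>R u) = qform X v - 2 * a * b + a\<^sup>2 * c"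
    using qform_add_scaleR[OF assms(1), of v "-a" u] c_def by simp
  have "0 \<le> (a * c - b)\<^sup>2 / c" using assms(2) c_def by simp
  also have "(a * c - b)\<^sup>2 / c = b\<^sup>2 / c - 2 * a * b + a\<^sup>2 * c"
    using assms(2) c_def by (simp add: field_simps power2_eq_square)
  finally show ?thesis unfolding qform_perp_def e b_def[symmetric] c_def[symmetric] by simp
qed

lemma qform_perp_eq:
  assumes "sym_matrix X" "0 < qform X u"
  shows "qform_perp X u v = qform X (v - ((u \<bullet> (X *v v)) / qform X u) *\<^sub>R u)"
proof -
  have "v \<bullet> (X *v u) = u \<bullet> (X *v v)" using assms(1) unfolding sym_matrix_def by metis
  then show ?thesis
    unfolding qform_perp_def
    using qform_add_scaleR[OF assms(1), of v "- (u \<bullet> (X *v v)) / qform X u" u] assms(2)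
    by (simp add: field_simps power2_eq_square)
qed

lemma qform_perp_mono:
  assumes "sym_matrix X" "sym_matrix Y" "0 < qform X u" "0 < qform Y u"
    and "\<And>h. qform X h \<le> qform Y h"
  shows "qform_perp X u v \<le> qform_perp Y u v"
  using qform_perp_le[OF assms(1,3)] qform_perp_eq[OF assms(2,4)] assms(5) by (metis order_trans)

lemma qform_perp_scaleR: "0 < c \<Longrightarrow> qform_perp (c *\<^sub>R X) u v = c * qform_perp X u v"
  by (simp add: qform_perp_def qform_scaleR scaleR_matrix_vector_assoc[symmetric]
      power2_eq_square field_simps)

lemma BFGS_sandwich:
  assumes A: "pos_def A" and sG: "sym_matrix G" and u: "u \<noteq> 0"
    and \<beta>: "0 < \<beta>" "\<beta> \<le> 1" and \<eta>: "1 \<le> \<eta>"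
    and lo: "\<And>h. \<beta> * qform A h \<le> qform G h" and hi: "\<And>h. qform G h \<le> \<eta> * qform A h"
  shows "\<beta> * qform A v \<le> qform (BFGS A G u) v" "qform (BFGS A G u) v \<le> \<eta> * qform A v"
    and "pos_def (BFGS A G u)"
proof -
  have sA: "sym_matrix A" and Au: "0 < qform A u" using A u unfolding pos_def_def by blast+
  define r where "r v = (u \<bullet> (A *v v))\<^sup>2 / qform A u" for v
  have r: "0 \<le> r v" "r v \<le> qform A v" for v
    using qform_Cauchy_Schwarz[OF sA pos_def_qform_nonneg[OF A], of u v] Au
    unfolding r_def by (simp_all add: field_simps)
  have Gu: "0 < qform G u" using lo[of u] Au \<beta> by (smt (verit) mult_pos_pos)
  have e: "qform (BFGS A G u) v = qform_perp G u v + r v" for v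
    using qform_BFGS[OF sA sG] r_def by simp
  have pA: "qform_perp A u v = qform A v - r v" for v by (simp add: qform_perp_def r_def)
  have "qform_perp G u v \<le> qform_perp (\<eta> *\<^sub>R A) u v"
    using sG sA Au Gu \<eta> hi
    by (intro qform_perp_mono) (auto simp: qform_scaleR sym_matrix_scaleR)
  also have "\<dots> = \<eta> * qform_perp A u v" using \<eta> by (intro qform_perp_scaleR) simp
  finally have "qform_perp G u v \<le> \<eta> * qform_perp A u v" .
  then show "qform (BFGS A G u) v \<le> \<eta> * qform A v"
    using mult_right_mono[of 1 \<eta> "r v"] r \<eta> unfolding e pA by (simp add: algebra_simps)
  have lower: "\<beta> * qform A v \<le> qform (BFGS A G u) v" for v
  proof -
    have "\<beta> * qform_perp A u v = qform_perp (\<beta> *\<^sub>R A) u v"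
      using \<beta> by (intro qform_perp_scaleR[symmetric])
    also have "\<dots> \<le> qform_perp G u v"
      using sG sA Au Gu \<beta> lo
      by (intro qform_perp_mono) (auto simp: qform_scaleR sym_matrix_scaleR)
    finally have "\<beta> * qform_perp A u v \<le> qform_perp G u v" .
    then show ?thesis
      using mult_right_mono[of \<beta> 1 "r v"] r \<beta> unfolding e pA by (simp add: algebra_simps)
  qed
  then show "\<beta> * qform A v \<le> qform (BFGS A G u) v" .
  show "pos_def (BFGS A G u)"
    by (rule pos_def_if_dominates[OF A sym_matrix_BFGS[OF sA sG] \<beta>(1) lower])
qed

section \<open>Bounding \<open>theta\<close>\<close>

lemma qform_mult_le_if_le_inverse:
  assumes A: "pos_def A" and sP: "sym_matrix P" and psd: "\<And>h. 0 \<le> qform P h" and d: "0 \<le> d"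
    and le: "\<And>h. qform P h \<le> d * qform (matrix_inv A) h"
  shows "qform A (P *v y) \<le> d * qform P y"
proof -
  define k where "k = P *v y"
  define Q where "Q = qform A k"
  have Q0: "0 \<le> Q" unfolding Q_def by (rule pos_def_qform_nonneg[OF A])
  have "Q = (A *v k) \<bullet> (P *v y)" unfolding Q_def qform_def k_def by (simp add: inner_commute)
  then have "Q\<^sup>2 \<le> qform P (A *v k) * qform P y"
    using qform_Cauchy_Schwarz[OF sP psd, of "A *v k" y] by simp
  also have "\<dots> \<le> d * qform (matrix_inv A) (A *v k) * qform P y"
    by (rule mult_right_mono[OF le psd])
  also have "qform (matrix_inv A) (A *v k) = Q" unfolding Q_def by (rule qform_matrix_inv_mult[OF A])
  finally have "Q * Q \<le> Q * (d * qform P y)" by (simp add: power2_eq_square algebra_simps)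
  then have "Q \<le> d * qform P y"
    using Q0 d psd[of y] by (cases "Q = 0") auto
  then show ?thesis unfolding Q_def k_def .
qed

text \<open>The matrix \<open>P = G\<inverse> - (1 - c) A\<inverse>\<close> lies between \<open>0\<close> and \<open>2 c A\<inverse>\<close>; the resulting
  inequality \<open>P A P \<le> 2 c P\<close>, evaluated at \<open>G u\<close>, rearranges to the claim.\<close>

lemma qform_matrix_inv_residual_le:
  assumes A: "pos_def A" and G: "pos_def G" and c: "0 \<le> c" "c < 1"
    and up: "\<And>h. qform A h \<le> (1 + c) * qform G h" and lo: "\<And>h. (1 - c) * qform G h \<le> qform A h"
  shows "qform (matrix_inv A) ((G - A) *v u) \<le> c\<^sup>2 * qform (matrix_inv A) (G *v u)"
proof -
  define Ai where "Ai = matrix_inv A"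
  define Gi where "Gi = matrix_inv G"
  define y where "y = G *v u"
  have sAi: "sym_matrix Ai" and sGi: "sym_matrix Gi" and sA: "sym_matrix A"
    using pos_def_matrix_inv A G unfolding Ai_def Gi_def pos_def_def by blast+
  have Giy: "Gi *v y = u" unfolding Gi_def y_def using matrix_inv_mult_vec[OF pos_def_invertible[OF G]] by simp
  have AAi: "A *v (Ai *v y) = y" and AiA: "Ai *v (A *v u) = u"
    unfolding Ai_def using matrix_inv_mult_vec[OF pos_def_invertible[OF A]] by simp_all
  have Gi_lo: "(1 - c) * qform Ai h \<le> qform Gi h" for h
    using qform_matrix_inv_antimono[OF G A, of "1 / (1 - c)" h] lo c
    unfolding Ai_def Gi_def by (simp add: field_simps)
  have Gi_up: "qform Gi h \<le> (1 + c) * qform Ai h" for h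
    unfolding Ai_def Gi_def by (rule qform_matrix_inv_antimono[OF A G]) (use c up in auto)
  define P where "P = Gi - (1 - c) *\<^sub>R Ai"
  have qP: "qform P h = qform Gi h - (1 - c) * qform Ai h" for h
    unfolding P_def by (simp add: qform_diff qform_scaleR)
  have conj_le: "qform A (P *v y) \<le> 2 * c * qform P y"
  proof (rule qform_mult_le_if_le_inverse[OF A])
    show "sym_matrix P" unfolding P_def by (intro sym_matrix_diff sym_matrix_scaleR sGi sAi)
    show "0 \<le> qform P h" "qform P h \<le> 2 * c * qform (matrix_inv A) h" for h
      using Gi_lo[of h] Gi_up[of h] unfolding qP Ai_def by (simp_all add: algebra_simps)
  qed (use c in simp)
  have "P *v y = u + (c - 1) *\<^sub>R (Ai *v y)"
    unfolding P_def
    by (simp add: Giy matrix_vector_mult_diff_rdistrib scaleR_matrix_vector_assoc[symmetric] algebra_simps)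
  then have "qform A (P *v y) = qform A u + 2 * (c - 1) * (u \<bullet> (A *v (Ai *v y)))
      + (c - 1)\<^sup>2 * qform A (Ai *v y)"
    using qform_add_scaleR[OF sA] by presburger
  also have "\<dots> = qform A u - 2 * (1 - c) * (y \<bullet> u) + (1 - c)\<^sup>2 * qform Ai y"
    using AAi qform_matrix_inv[OF A, of y] by (simp add: Ai_def inner_commute power2_eq_square algebra_simps)
  finally have PAP: "qform A (P *v y) = qform A u - 2 * (1 - c) * (y \<bullet> u) + (1 - c)\<^sup>2 * qform Ai y" .
  have qPy: "qform P y = y \<bullet> u - (1 - c) * qform Ai y"
    unfolding qP by (simp add: qform_def Giy)
  have "qform Ai ((G - A) *v u) = qform Ai y - 2 * (y \<bullet> u) + qform A u"
    using qform_diff_vec[OF sAi, of y "A *v u"] AiA qform_matrix_inv_mult[OF A]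
    by (simp add: y_def Ai_def matrix_vector_mult_diff_rdistrib)
  with conj_le PAP qPy show ?thesis
    unfolding Ai_def[symmetric] y_def[symmetric] by (simp add: algebra_simps power2_eq_square)
qed

lemma theta_le:
  assumes A: "pos_def A" and G: "pos_def G" and c: "0 \<le> c" "c < 1"
    and "\<And>h. qform A h \<le> (1 + c) * qform G h" and "\<And>h. (1 - c) * qform G h \<le> qform A h"
  shows "theta A G u \<le> c"
proof -
  have sG: "sym_matrix G" and sGA: "sym_matrix (G - A)"
    using A G sym_matrix_diff unfolding pos_def_def by blast+
  have conj: "u \<bullet> ((B ** matrix_inv A ** B) *v u) = qform (matrix_inv A) (B *v u)"
    if "sym_matrix B" for B
  proof -
    have "u \<bullet> ((B ** matrix_inv A ** B) *v u) = u \<bullet> (B *v (matrix_inv A *v (B *v u)))"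
      by (simp add: matrix_vector_mul_assoc matrix_mul_assoc)
    also have "\<dots> = (matrix_inv A *v (B *v u)) \<bullet> (B *v u)"
      using that unfolding sym_matrix_def by metis
    finally show ?thesis by (simp add: qform_def inner_commute)
  qed
  define N where "N = qform (matrix_inv A) ((G - A) *v u)"
  define D where "D = qform (matrix_inv A) (G *v u)"
  have "N \<le> c\<^sup>2 * D" unfolding N_def D_def by (rule qform_matrix_inv_residual_le[OF assms])
  moreover have "0 \<le> D" unfolding D_def by (rule pos_def_qform_nonneg[OF pos_def_matrix_inv[OF A]])
  ultimately have "N / D \<le> c\<^sup>2"
    by (cases "D = 0") (simp_all add: field_simps)
  then have "sqrt (N / D) \<le> sqrt (c\<^sup>2)" by (rule real_sqrt_le_mono)
  then show ?thesis unfolding theta_def conj[OF sGA] conj[OF sG] N_def D_def using c by simp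
qed

section \<open>First and second derivatives\<close>

lemma difference_quotient_tendsto:
  fixes \<phi> :: "'a::real_normed_vector \<Rightarrow> real"
  assumes "(\<phi> has_derivative D) (at y)"
  shows "((\<lambda>t. (\<phi> (y + t *\<^sub>R h) - \<phi> y) / t) \<longlongrightarrow> D h) (at_right 0)"
proof -
  have "((\<lambda>t. y + t *\<^sub>R h) has_derivative (\<lambda>t. t *\<^sub>R h)) (at 0)"
    by (auto intro!: derivative_eq_intros)
  moreover have "(\<phi> has_derivative D) (at (y + 0 *\<^sub>R h))"
    using assms by simp
  ultimately have "((\<lambda>t. \<phi> (y + t *\<^sub>R h)) has_derivative (\<lambda>t. D (t *\<^sub>R h))) (at 0)"
    by (rule has_derivative_compose)
  then have "((\<lambda>t. \<phi> (y + t *\<^sub>R h)) has_real_derivative D h) (at 0)"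
    unfolding has_field_derivative_def
    by (rule has_derivative_eq_rhs) (simp add: fun_eq_iff linear_scale[OF has_derivative_linear[OF assms]])
  then show ?thesis
    unfolding has_field_derivative_iff by (simp add: filterlim_at_split)
qed

lemma has_real_derivative_along_line:
  assumes grad: "\<And>y. (f has_derivative (\<lambda>h. g y \<bullet> h)) (at y)"
  shows "((\<lambda>\<sigma>. f (a + \<sigma> *\<^sub>R h)) has_real_derivative g (a + \<sigma> *\<^sub>R h) \<bullet> h) (at \<sigma>)"
proof -
  have "((\<lambda>\<sigma>::real. a + \<sigma> *\<^sub>R h) has_derivative (\<lambda>d. d *\<^sub>R h)) (at \<sigma>)"
    by (auto intro!: derivative_eq_intros)
  from has_derivative_compose[OF this grad]
  show ?thesis unfolding has_field_derivative_def
    by (rule has_derivative_eq_rhs) (auto simp: mult.commute)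
qed

lemma strongly_convex_above_tangent:
  assumes sc: "strongly_convex mu f" and d: "(f has_derivative (\<lambda>h. g x \<bullet> h)) (at x)"
  shows "f x + g x \<bullet> (y - x) + mu / 2 * (norm (y - x))\<^sup>2 \<le> f y"
proof -
  define c where "c = mu / 2 * (norm (y - x))\<^sup>2"
  have "eventually (\<lambda>t. (f (x + t *\<^sub>R (y - x)) - f x) / t \<le> f y - f x - (1 - t) * c) (at_right 0)"
  proof (rule eventually_at_rightI[of 0 1])
    fix t :: real assume "t \<in> {0<..<1}"
    then have t: "0 < t" "t < 1" by simp_all
    have "f (t *\<^sub>R y + (1 - t) *\<^sub>R x)
        \<le> t * f y + (1 - t) * f x - mu / 2 * t * (1 - t) * (norm (y - x))\<^sup>2"
      using sc[unfolded strongly_convex_def, rule_format, of t y x] t by simp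
    moreover have "t *\<^sub>R y + (1 - t) *\<^sub>R x = x + t *\<^sub>R (y - x)" by (simp add: algebra_simps)
    ultimately have "f (x + t *\<^sub>R (y - x)) - f x \<le> t * (f y - f x - (1 - t) * c)"
      unfolding c_def by (simp add: algebra_simps)
    then show "(f (x + t *\<^sub>R (y - x)) - f x) / t \<le> f y - f x - (1 - t) * c"
      using t by (simp add: pos_divide_le_eq mult.commute)
  qed simp
  moreover have "((\<lambda>t. f y - f x - (1 - t) * c) \<longlongrightarrow> f y - f x - (1 - 0) * c) (at_right 0)"
    by (intro tendsto_intros)
  ultimately have "g x \<bullet> (y - x) \<le> f y - f x - c"
    using difference_quotient_tendsto[OF d, of "y - x"]
    by (intro tendsto_le[OF trivial_limit_at_right_real]) simp_all
  then show ?thesis unfolding c_def by simp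
qed

lemma strongly_convex_gradient_monotone:
  fixes f :: "'a::real_inner \<Rightarrow> real"
  assumes sc: "strongly_convex mu f" and grad: "\<And>y. (f has_derivative (\<lambda>h. g y \<bullet> h)) (at y)"
  shows "mu * (norm (y - x))\<^sup>2 \<le> (g y - g x) \<bullet> (y - x)"
  using strongly_convex_above_tangent[OF sc grad, where x = x and y = y]
    strongly_convex_above_tangent[OF sc grad, where x = y and y = x]
  by (simp add: norm_minus_commute inner_diff_left inner_diff_right inner_commute algebra_simps)

lemma derivative_inner_ge_if_monotone:
  fixes g :: "'a::real_inner \<Rightarrow> 'a"
  assumes mono: "\<And>x y. mu * (norm (y - x))\<^sup>2 \<le> (g y - g x) \<bullet> (y - x)"
    and hess: "(g has_derivative D) (at y)"
  shows "mu * (norm h)\<^sup>2 \<le> D h \<bullet> h"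
proof -
  have "((\<lambda>z. g z \<bullet> h) has_derivative (\<lambda>k. D k \<bullet> h)) (at y)"
    using hess by (auto intro!: derivative_eq_intros)
  from difference_quotient_tendsto[OF this, of h]
  have lim: "((\<lambda>t. (g (y + t *\<^sub>R h) - g y) \<bullet> h / t) \<longlongrightarrow> D h \<bullet> h) (at_right 0)"
    by (simp add: inner_diff_left)
  have "mu * (norm h)\<^sup>2 \<le> (g (y + t *\<^sub>R h) - g y) \<bullet> h / t" if "0 < t" for t
  proof -
    have "t * (t * (mu * (norm h)\<^sup>2)) \<le> t * ((g (y + t *\<^sub>R h) - g y) \<bullet> h)"
      using mono[of y "y + t *\<^sub>R h"] that
      by (simp add: power_mult_distrib power2_eq_square algebra_simps)
    then show ?thesis using that by (simp add: pos_le_divide_eq mult.commute)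
  qed
  then show ?thesis
    by (intro tendsto_lowerbound[OF lim]) (auto intro: eventually_at_rightI[of 0 1])
qed

lemma derivative_inner_le_if_lipschitz:
  fixes g :: "'a::real_inner \<Rightarrow> 'a"
  assumes lip: "L-lipschitz_on UNIV g" and hess: "(g has_derivative D) (at y)"
  shows "D h \<bullet> h \<le> L * (norm h)\<^sup>2"
proof -
  have "((\<lambda>z. g z \<bullet> h) has_derivative (\<lambda>k. D k \<bullet> h)) (at y)"
    using hess by (auto intro!: derivative_eq_intros)
  from difference_quotient_tendsto[OF this, of h]
  have lim: "((\<lambda>t. (g (y + t *\<^sub>R h) - g y) \<bullet> h / t) \<longlongrightarrow> D h \<bullet> h) (at_right 0)"
    by (simp add: inner_diff_left)
  have "(g (y + t *\<^sub>R h) - g y) \<bullet> h / t \<le> L * (norm h)\<^sup>2" if "0 < t" for t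
  proof -
    have "(g (y + t *\<^sub>R h) - g y) \<bullet> h \<le> norm (g (y + t *\<^sub>R h) - g y) * norm h"
      by (rule norm_cauchy_schwarz)
    also have "\<dots> \<le> L * (t * norm h) * norm h"
      using lipschitz_onD[OF lip, of "y + t *\<^sub>R h" y] that by (simp add: dist_norm mult_right_mono)
    finally show ?thesis using that by (simp add: pos_divide_le_eq power2_eq_square algebra_simps)
  qed
  then show ?thesis
    by (intro tendsto_upperbound[OF lim]) (auto intro: eventually_at_rightI[of 0 1])
qed

lemma second_difference_mean_value:
  assumes grad: "\<And>y. (f has_derivative (\<lambda>h. g y \<bullet> h)) (at y)" and t: "0 < t"
  obtains \<xi> where "0 < \<xi>" "\<xi> < t"
    "f (y + t *\<^sub>R h + t *\<^sub>R k) - f (y + t *\<^sub>R h) - f (y + t *\<^sub>R k) + f y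
       = t * ((g (y + t *\<^sub>R k + \<xi> *\<^sub>R h) - g (y + \<xi> *\<^sub>R h)) \<bullet> h)"
proof -
  define \<phi> where "\<phi> \<sigma> = f (y + t *\<^sub>R k + \<sigma> *\<^sub>R h) - f (y + \<sigma> *\<^sub>R h)" for \<sigma>
  define \<phi>' where "\<phi>' \<sigma> = (g (y + t *\<^sub>R k + \<sigma> *\<^sub>R h) - g (y + \<sigma> *\<^sub>R h)) \<bullet> h" for \<sigma>
  have "(\<phi> has_real_derivative \<phi>' \<sigma>) (at \<sigma>)" for \<sigma>
    unfolding \<phi>_def \<phi>'_def inner_diff_left by (intro DERIV_diff has_real_derivative_along_line[OF grad])
  with MVT2[of 0 t \<phi> \<phi>'] t obtain \<xi> where "0 < \<xi>" "\<xi> < t" "\<phi> t - \<phi> 0 = t * \<phi>' \<xi>"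
    by auto
  moreover have "\<phi> t - \<phi> 0 = f (y + t *\<^sub>R h + t *\<^sub>R k) - f (y + t *\<^sub>R h) - f (y + t *\<^sub>R k) + f y"
    unfolding \<phi>_def by (simp add: algebra_simps)
  ultimately show thesis using that unfolding \<phi>'_def by simp
qed

lemma second_difference_error_le:
  fixes f :: "'a::real_inner \<Rightarrow> real"
  assumes grad: "\<And>y. (f has_derivative (\<lambda>h. g y \<bullet> h)) (at y)" and lin: "linear D"
    and \<epsilon>: "0 \<le> \<epsilon>" and R: "\<And>w. norm (w - y) < d \<Longrightarrow> norm (g w - g y - D (w - y)) \<le> \<epsilon> * norm (w - y)"
    and t: "0 < t" "t * (norm h + norm k) < d"
  shows "\<bar>(f (y + t *\<^sub>R h + t *\<^sub>R k) - f (y + t *\<^sub>R h) - f (y + t *\<^sub>R k) + f y) / t\<^sup>2 - D k \<bullet> h\<bar>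
    \<le> \<epsilon> * (2 * (norm h + norm k) * norm h)"
proof -
  define n where "n = norm h + norm k"
  obtain \<xi> where \<xi>: "0 < \<xi>" "\<xi> < t" and mv:
    "f (y + t *\<^sub>R h + t *\<^sub>R k) - f (y + t *\<^sub>R h) - f (y + t *\<^sub>R k) + f y
       = t * ((g (y + t *\<^sub>R k + \<xi> *\<^sub>R h) - g (y + \<xi> *\<^sub>R h)) \<bullet> h)"
    using second_difference_mean_value[OF grad t(1)] by blast
  define w1 where "w1 = y + t *\<^sub>R k + \<xi> *\<^sub>R h"
  define w2 where "w2 = y + \<xi> *\<^sub>R h"
  have "\<xi> * norm h \<le> t * norm h" "0 \<le> t * norm k"
    using \<xi> t by (simp_all add: mult_right_mono)
  moreover have "norm (w1 - y) \<le> t * norm k + \<xi> * norm h"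
    using norm_triangle_ineq[of "t *\<^sub>R k" "\<xi> *\<^sub>R h"] \<xi> t unfolding w1_def by simp
  moreover have "norm (w2 - y) = \<xi> * norm h" "t * n = t * norm h + t * norm k"
    using \<xi> unfolding w2_def n_def by (simp_all add: algebra_simps)
  ultimately have w: "norm (w1 - y) \<le> t * n" "norm (w2 - y) \<le> t * n"
    by linarith+
  have R1: "norm (g w1 - g y - D (w1 - y)) \<le> \<epsilon> * (t * n)"
    using order_trans[OF R mult_left_mono[OF w(1) \<epsilon>]] w(1) t(2) unfolding n_def by linarith
  have R2: "norm (g w2 - g y - D (w2 - y)) \<le> \<epsilon> * (t * n)"
    using order_trans[OF R mult_left_mono[OF w(2) \<epsilon>]] w(2) t(2) unfolding n_def by linarith
  have "D (w1 - y) - D (w2 - y) = t *\<^sub>R D k"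
    unfolding w1_def w2_def by (simp add: linear_add[OF lin] linear_scale[OF lin])
  then have eq: "g w1 - g w2 - t *\<^sub>R D k = (g w1 - g y - D (w1 - y)) - (g w2 - g y - D (w2 - y))"
    by (simp add: algebra_simps)
  have "norm (g w1 - g w2 - t *\<^sub>R D k) \<le> 2 * (\<epsilon> * (t * n))"
    unfolding eq mult_2 by (rule order_trans[OF norm_triangle_ineq4 add_mono[OF R1 R2]])
  then have CS: "\<bar>(g w1 - g w2 - t *\<^sub>R D k) \<bullet> h\<bar> \<le> 2 * (\<epsilon> * (t * n)) * norm h"
    by (rule order_trans[OF Cauchy_Schwarz_ineq2 mult_right_mono]) simp
  have "(f (y + t *\<^sub>R h + t *\<^sub>R k) - f (y + t *\<^sub>R h) - f (y + t *\<^sub>R k) + f y) / t\<^sup>2 - D k \<bullet> h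
      = (g w1 - g w2 - t *\<^sub>R D k) \<bullet> h / t"
    unfolding mv w1_def[symmetric] w2_def[symmetric] using t
    by (simp add: inner_diff_left power2_eq_square diff_divide_distrib)
  then show ?thesis
    using CS t unfolding n_def by (simp add: pos_divide_le_eq algebra_simps)
qed

lemma second_difference_tendsto:
  fixes f :: "'a::real_inner \<Rightarrow> real"
  assumes grad: "\<And>y. (f has_derivative (\<lambda>h. g y \<bullet> h)) (at y)" and hess: "(g has_derivative D) (at y)"
  shows "((\<lambda>t. (f (y + t *\<^sub>R h + t *\<^sub>R k) - f (y + t *\<^sub>R h) - f (y + t *\<^sub>R k) + f y) / t\<^sup>2)
           \<longlongrightarrow> D k \<bullet> h) (at_right 0)"
proof (rule tendstoI)
  fix e :: real assume e: "0 < e"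
  define n where "n = norm h + norm k"
  define C where "C = 2 * n * norm h + 1"
  have C: "0 < C" unfolding C_def n_def by (simp add: add_nonneg_pos)
  obtain d where d: "0 < d" and R: "\<And>w. norm (w - y) < d \<Longrightarrow>
      norm (g w - g y - D (w - y)) \<le> e / C * norm (w - y)"
    using hess e C unfolding has_derivative_at_alt by (meson divide_pos_pos)
  show "eventually (\<lambda>t. dist ((f (y + t *\<^sub>R h + t *\<^sub>R k) - f (y + t *\<^sub>R h) - f (y + t *\<^sub>R k) + f y) / t\<^sup>2)
           (D k \<bullet> h) < e) (at_right 0)"
  proof (rule eventually_at_rightI)
    show "0 < d / (n + 1)" unfolding n_def using d by (simp add: add_nonneg_pos)
    fix t assume "t \<in> {0<..<d / (n + 1)}"
    then have "0 < t" "t * (n + 1) < d" unfolding n_def by (auto simp: pos_less_divide_eq add_nonneg_pos)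
    then have t: "0 < t" "t * n < d" by (simp_all add: algebra_simps)
    have "\<bar>(f (y + t *\<^sub>R h + t *\<^sub>R k) - f (y + t *\<^sub>R h) - f (y + t *\<^sub>R k) + f y) / t\<^sup>2 - D k \<bullet> h\<bar>
        \<le> e / C * (2 * n * norm h)"
      using second_difference_error_le[OF grad has_derivative_linear[OF hess] _ R t[unfolded n_def]] e C
      unfolding n_def by simp
    also have "\<dots> < e / C * C" using e C by (intro mult_strict_left_mono) (simp_all add: C_def)
    also have "\<dots> = e" using C by simp
    finally show "dist ((f (y + t *\<^sub>R h + t *\<^sub>R k) - f (y + t *\<^sub>R h) - f (y + t *\<^sub>R k) + f y) / t\<^sup>2)
           (D k \<bullet> h) < e" by (simp add: dist_real_def)
  qed
qed

lemma hessian_symmetric: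
  fixes f :: "'a::real_inner \<Rightarrow> real"
  assumes grad: "\<And>y. (f has_derivative (\<lambda>h. g y \<bullet> h)) (at y)" and hess: "(g has_derivative D) (at y)"
  shows "D k \<bullet> h = D h \<bullet> k"
proof (rule tendsto_unique[OF trivial_limit_at_right_real])
  show "((\<lambda>t. (f (y + t *\<^sub>R h + t *\<^sub>R k) - f (y + t *\<^sub>R h) - f (y + t *\<^sub>R k) + f y) / t\<^sup>2)
           \<longlongrightarrow> D k \<bullet> h) (at_right 0)"
    by (rule second_difference_tendsto[OF grad hess])
  show "((\<lambda>t. (f (y + t *\<^sub>R h + t *\<^sub>R k) - f (y + t *\<^sub>R h) - f (y + t *\<^sub>R k) + f y) / t\<^sup>2)
           \<longlongrightarrow> D h \<bullet> k) (at_right 0)"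
    using second_difference_tendsto[OF grad hess, of k h] by (simp add: algebra_simps)
qed

section \<open>The standing assumptions\<close>

lemma lipschitz_on_matrix_if_qform:
  fixes F :: "'a::metric_space \<Rightarrow> real^'n^'n" and K :: real
  assumes sym: "\<And>y. sym_matrix (F y)" and K: "0 \<le> K"
    and le: "\<And>y x v. \<bar>qform (F y - F x) v\<bar> \<le> K * dist y x * (norm v)\<^sup>2"
  shows "(CARD('n) * CARD('n) * (2 * K))-lipschitz_on UNIV F"
proof (rule lipschitz_onI)
  fix y x
  define D where "D = F y - F x"
  have sD: "sym_matrix D" unfolding D_def by (intro sym_matrix_diff sym)
  have sq: "\<bar>qform D v\<bar> \<le> 4 * (K * dist y x)" if "norm v \<le> 2" for v
  proof -
    have "(norm v)\<^sup>2 \<le> 2\<^sup>2" using that by (intro power_mono) simp_all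
    then have "K * dist y x * (norm v)\<^sup>2 \<le> K * dist y x * 4"
      using K by (intro mult_left_mono) simp_all
    then show ?thesis using le[of y x v] unfolding D_def by (simp add: mult.commute)
  qed
  have entry: "\<bar>D $ i $ j\<bar> \<le> 2 * (K * dist y x)" for i j
  proof -
    have "D $ i $ j = (qform D (axis i 1 + axis j 1) - qform D (axis i 1 - axis j 1)) / 4"
      by (simp add: matrix_vector_mult_basis inner_axis' column_def
          inner_mult_vec_polarization[OF sD, symmetric])
    moreover have "norm (axis i (1::real) + axis j 1) \<le> 2" "norm (axis i (1::real) - axis j 1) \<le> 2"
      using norm_triangle_ineq[of "axis i (1::real)" "axis j 1"]
        norm_triangle_ineq4[of "axis i (1::real)" "axis j 1"]
      by (simp_all add: norm_axis_1)
    then have "\<bar>qform D (axis i 1 + axis j 1)\<bar> \<le> 4 * (K * dist y x)"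
      "\<bar>qform D (axis i 1 - axis j 1)\<bar> \<le> 4 * (K * dist y x)"
      by (simp_all add: sq)
    ultimately show ?thesis by (auto simp: abs_le_iff)
  qed
  have "norm D \<le> (\<Sum>i\<in>UNIV. norm (D $ i))" unfolding norm_vec_def by (rule L2_set_le_sum) simp
  also have "\<dots> \<le> (\<Sum>i\<in>(UNIV::'n set). \<Sum>j\<in>(UNIV::'n set). \<bar>D $ i $ j\<bar>)"
    by (intro sum_mono norm_le_l1_cart)
  also have "\<dots> \<le> (\<Sum>i\<in>(UNIV::'n set). \<Sum>j\<in>(UNIV::'n set). 2 * (K * dist y x))"
    by (intro sum_mono entry)
  finally show "dist (F y) (F x) \<le> CARD('n) * CARD('n) * (2 * K) * dist y x"
    unfolding D_def dist_norm by simp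
qed (use K in simp)

locale self_concordant_objective =
  fixes f :: "real^'n \<Rightarrow> real"
    and g :: "real^'n \<Rightarrow> real^'n"
    and H :: "real^'n \<Rightarrow> real^'n^'n"
    and mu L M :: real
  assumes grad: "\<And>y. (f has_derivative (\<lambda>h. g y \<bullet> h)) (at y)"
    and hess: "\<And>y. (g has_derivative (\<lambda>h. H y *v h)) (at y)"
    and mu_pos: "0 < mu" and mu_le_L: "mu \<le> L" and M_pos: "0 < M"
    and sconv: "strongly_convex mu f"
    and lip: "L-lipschitz_on UNIV g"
    and ssc: "strongly_self_concordant M H"
begin

lemma L_pos: "0 < L"
  using mu_pos mu_le_L by simp

lemma sym_matrix_hessian: "sym_matrix (H y)"
  unfolding sym_matrix_def using hessian_symmetric[OF grad hess] by (metis inner_commute)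

lemma qform_hessian_le: "qform (H y) h \<le> L * (norm h)\<^sup>2"
  using derivative_inner_le_if_lipschitz[OF lip hess] by (simp add: qform_def inner_commute)

lemma qform_hessian_ge: "mu * (norm h)\<^sup>2 \<le> qform (H y) h"
  using derivative_inner_ge_if_monotone[OF strongly_convex_gradient_monotone[OF sconv grad] hess]
  by (simp add: qform_def inner_commute)

lemma qform_hessian_nonneg: "0 \<le> qform (H y) h"
  using qform_hessian_ge[of h y] mu_pos by (smt (verit) mult_nonneg_nonneg zero_le_power2)

lemma pos_def_hessian: "pos_def (H y)"
  unfolding pos_def_def using sym_matrix_hessian qform_hessian_ge mu_pos
  by (metis mult_pos_pos zero_less_norm_iff order_less_le_trans zero_less_power)

lemma qform_hessian_diff_le:
  "qform (H y) h - qform (H x) h \<le> M * local_norm H z (y - x) * qform (H w) h"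
  using ssc unfolding strongly_self_concordant_def loewner_le_iff_qform qform_diff qform_scaleR by blast

lemma local_norm_eq: "local_norm H z v = sqrt (qform (H z) v)"
  unfolding local_norm_def qform_def ..

lemma local_norm_nonneg: "0 \<le> local_norm H z v"
  unfolding local_norm_eq using qform_hessian_nonneg by simp

lemma local_norm_scaleR: "local_norm H z (c *\<^sub>R v) = \<bar>c\<bar> * local_norm H z v"
  unfolding local_norm_eq qform_scaleR_vec by (simp add: real_sqrt_mult)

lemma local_norm_le: "local_norm H z v \<le> sqrt L * norm v"
  unfolding local_norm_eq
  using real_sqrt_le_mono[OF qform_hessian_le] by (simp add: real_sqrt_mult)

lemma abs_qform_hessian_diff_le:
  "\<bar>qform (H y - H x) v\<bar> \<le> (M * sqrt L * L) * dist y x * (norm v)\<^sup>2"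
proof -
  have "M * local_norm H x d * qform (H x) v \<le> (M * sqrt L * L) * norm d * (norm v)\<^sup>2" for d
  proof -
    have "M * local_norm H x d * qform (H x) v \<le> M * (sqrt L * norm d) * (L * (norm v)\<^sup>2)"
      using M_pos L_pos local_norm_le local_norm_nonneg qform_hessian_le qform_hessian_nonneg
      by (intro mult_mono mult_left_mono) auto
    then show ?thesis by (simp add: algebra_simps)
  qed
  from this[of "y - x"] this[of "x - y"]
  show ?thesis
    using qform_hessian_diff_le[of y v x x x] qform_hessian_diff_le[of x v y x x]
    unfolding qform_diff dist_norm by (simp add: norm_minus_commute)
qed

lemma continuous_on_hessian: "continuous_on S H"
proof -
  have "0 \<le> M * sqrt L * L" using M_pos L_pos by simp
  from lipschitz_on_matrix_if_qform[OF sym_matrix_hessian this abs_qform_hessian_diff_le]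
  show ?thesis by (meson continuous_on_subset lipschitz_on_continuous_on top_greatest)
qed

end

section \<open>The averaged Hessian\<close>

lemma has_integral_affine_unit: "((\<lambda>\<tau>::real. \<alpha> + \<beta> * \<tau>) has_integral (\<alpha> + \<beta> / 2)) {0..1}"
proof -
  have "((\<lambda>\<tau>. \<alpha> + \<beta> * \<tau>) has_integral
      ((\<lambda>\<tau>. \<alpha> * \<tau> + \<beta> * \<tau>\<^sup>2 / 2) 1 - (\<lambda>\<tau>. \<alpha> * \<tau> + \<beta> * \<tau>\<^sup>2 / 2) 0)) {0..1::real}"
  proof (rule fundamental_theorem_of_calculus)
    fix x :: real assume "x \<in> {0..1}"
    have "((\<lambda>\<tau>. \<alpha> * \<tau> + \<beta> * \<tau>\<^sup>2 / 2) has_real_derivative \<alpha> + \<beta> * x) (at x within {0..1})"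
      by (auto intro!: derivative_eq_intros)
    then show "((\<lambda>\<tau>. \<alpha> * \<tau> + \<beta> * \<tau>\<^sup>2 / 2) has_vector_derivative \<alpha> + \<beta> * x) (at x within {0..1})"
      using has_real_derivative_iff_has_vector_derivative by blast
  qed simp
  then show ?thesis by simp
qed

lemma inverse_one_plus_ge_tangent:
  fixes x m :: real
  assumes "0 \<le> x" "0 \<le> m"
  shows "1 / (1 + m) - (x - m) / (1 + m)\<^sup>2 \<le> 1 / (1 + x)"
proof -
  have "(1 + m)\<^sup>2 - (1 + x) * ((1 + m) - (x - m)) = (x - m)\<^sup>2" by algebra
  then have "(1 + x) * ((1 + m) - (x - m)) \<le> (1 + m)\<^sup>2"
    using zero_le_power2[of "x - m"] by linarith
  then have "((1 + m) - (x - m)) / (1 + m)\<^sup>2 \<le> 1 / (1 + x)"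
    using assms by (simp add: field_simps)
  moreover have "1 / (1 + m) = (1 + m) / (1 + m)\<^sup>2"
    using assms by (simp add: power2_eq_square)
  then have "1 / (1 + m) - (x - m) / (1 + m)\<^sup>2 = ((1 + m) - (x - m)) / (1 + m)\<^sup>2"
    by (metis diff_divide_distrib)
  ultimately show ?thesis by simp
qed

lemma bounded_linear_mult_vec_matrix: "bounded_linear (\<lambda>A::real^'n^'m. A *v y)"
proof -
  have "linear (\<lambda>A::real^'n^'m. A *v y)"
    by (rule linearI) (simp_all add: matrix_vector_mult_add_rdistrib scaleR_matrix_vector_assoc[symmetric])
  then show ?thesis using linear_conv_bounded_linear by blast
qed

context self_concordant_objective
begin

definition avg_hessian :: "real^'n \<Rightarrow> real^'n \<Rightarrow> real^'n^'n" where
  "avg_hessian a s = integral {0..1} (\<lambda>\<tau>::real. H (a + \<tau> *\<^sub>R s))"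

lemma integrable_hessian_segment: "(\<lambda>\<tau>::real. H (a + \<tau> *\<^sub>R s)) integrable_on {0..1}"
  by (intro integrable_continuous_interval continuous_on_compose2[OF continuous_on_hessian[of UNIV]])
    (auto intro!: continuous_intros)

lemma avg_hessian_mult_vec:
  "avg_hessian a s *v y = integral {0..1} (\<lambda>\<tau>. H (a + \<tau> *\<^sub>R s) *v y)"
  using integral_linear[OF integrable_hessian_segment bounded_linear_mult_vec_matrix]
  unfolding avg_hessian_def o_def by simp

lemma inner_avg_hessian:
  "x \<bullet> (avg_hessian a s *v y) = integral {0..1} (\<lambda>\<tau>. x \<bullet> (H (a + \<tau> *\<^sub>R s) *v y))"
  and integrable_inner_hessian_segment:
  "(\<lambda>\<tau>::real. x \<bullet> (H (a + \<tau> *\<^sub>R s) *v y)) integrable_on {0..1}"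
proof -
  have bl: "bounded_linear (\<lambda>A::real^'n^'n. x \<bullet> (A *v y))"
    by (rule bounded_linear_compose[OF bounded_linear_inner_right bounded_linear_mult_vec_matrix])
  show "x \<bullet> (avg_hessian a s *v y) = integral {0..1} (\<lambda>\<tau>. x \<bullet> (H (a + \<tau> *\<^sub>R s) *v y))"
    using integral_linear[OF integrable_hessian_segment bl] unfolding avg_hessian_def o_def by simp
  show "(\<lambda>\<tau>::real. x \<bullet> (H (a + \<tau> *\<^sub>R s) *v y)) integrable_on {0..1}"
    using integrable_linear[OF integrable_hessian_segment bl] unfolding o_def by simp
qed

lemma sym_matrix_avg_hessian: "sym_matrix (avg_hessian a s)"
  using sym_matrix_hessian unfolding sym_matrix_def inner_avg_hessian by simp

lemma gradient_diff_eq_avg_hessian: "g (a + s) - g a = avg_hessian a s *v s"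
proof -
  have "((\<lambda>\<tau>. H (a + \<tau> *\<^sub>R s) *v s) has_integral (g (a + 1 *\<^sub>R s) - g (a + 0 *\<^sub>R s))) {0..1}"
  proof (rule fundamental_theorem_of_calculus)
    fix \<tau> :: real
    have "((\<lambda>\<tau>::real. a + \<tau> *\<^sub>R s) has_derivative (\<lambda>d. d *\<^sub>R s)) (at \<tau> within {0..1})"
      by (auto intro!: derivative_eq_intros)
    from has_derivative_compose[OF this hess]
    show "((\<lambda>\<tau>. g (a + \<tau> *\<^sub>R s)) has_vector_derivative H (a + \<tau> *\<^sub>R s) *v s) (at \<tau> within {0..1})"
      unfolding has_vector_derivative_def by (simp add: matrix_vector_mult_scaleR)
  qed simp
  then show ?thesis
    unfolding avg_hessian_mult_vec by (simp add: integral_unique)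
qed

lemma qform_avg_hessian_le_affine:
  assumes "\<And>\<tau>. \<tau> \<in> {0..1} \<Longrightarrow> qform (H (a + \<tau> *\<^sub>R s)) v \<le> \<alpha> + \<beta> * \<tau>"
  shows "qform (avg_hessian a s) v \<le> \<alpha> + \<beta> / 2"
  using integral_le[OF integrable_inner_hessian_segment has_integral_integrable[OF has_integral_affine_unit]]
    assms integral_unique[OF has_integral_affine_unit]
  unfolding qform_def inner_avg_hessian by metis

lemma qform_avg_hessian_ge_affine:
  assumes "\<And>\<tau>. \<tau> \<in> {0..1} \<Longrightarrow> \<alpha> + \<beta> * \<tau> \<le> qform (H (a + \<tau> *\<^sub>R s)) v"
  shows "\<alpha> + \<beta> / 2 \<le> qform (avg_hessian a s) v"
  using integral_le[OF has_integral_integrable[OF has_integral_affine_unit] integrable_inner_hessian_segment]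
    assms integral_unique[OF has_integral_affine_unit]
  unfolding qform_def inner_avg_hessian by metis

lemma qform_avg_hessian_le_scaled:
  assumes "\<And>\<tau>. \<tau> \<in> {0..1} \<Longrightarrow> qform (H (a + \<tau> *\<^sub>R s)) v \<le> (1 + \<alpha> + \<beta> * \<tau>) * Q"
  shows "qform (avg_hessian a s) v \<le> (1 + \<alpha> + \<beta> / 2) * Q"
  using qform_avg_hessian_le_affine[of a s v "(1 + \<alpha>) * Q" "\<beta> * Q"] assms
  by (simp add: algebra_simps)

text \<open>Here \<open>1 / (1 + x)\<close> is bounded below by its tangent line at \<open>x = \<alpha> + \<beta> / 2\<close>, which is
  affine in \<open>\<tau>\<close> when \<open>x = \<alpha> + \<beta> \<tau>\<close> and integrates to \<open>1 / (1 + \<alpha> + \<beta> / 2)\<close>.\<close>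

lemma qform_avg_hessian_ge_scaled:
  assumes le: "\<And>\<tau>. \<tau> \<in> {0..1} \<Longrightarrow> Q \<le> (1 + \<alpha> + \<beta> * \<tau>) * qform (H (a + \<tau> *\<^sub>R s)) v"
    and Q: "0 \<le> Q" and \<alpha>: "0 \<le> \<alpha>" "0 \<le> \<alpha> + \<beta>"
  shows "Q \<le> (1 + \<alpha> + \<beta> / 2) * qform (avg_hessian a s) v"
proof -
  define m where "m = \<alpha> + \<beta> / 2"
  define d where "d = inverse ((1 + m)\<^sup>2)"
  have m: "0 \<le> m" unfolding m_def using \<alpha> by simp
  have "Q * (1 / (1 + m) - (\<alpha> - m) * d) + (- Q * \<beta> * d) / 2 \<le> qform (avg_hessian a s) v"
  proof (rule qform_avg_hessian_ge_affine)
    fix \<tau> :: real assume \<tau>: "\<tau> \<in> {0..1}"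
    have "\<alpha> + \<beta> * \<tau> = (1 - \<tau>) * \<alpha> + \<tau> * (\<alpha> + \<beta>)" by (simp add: algebra_simps)
    then have x: "0 \<le> \<alpha> + \<beta> * \<tau>" using \<alpha> \<tau> by simp
    have "Q * (1 / (1 + m) - (\<alpha> - m) * d) + (- Q * \<beta> * d) * \<tau>
        = Q * (1 / (1 + m) - (\<alpha> + \<beta> * \<tau> - m) / (1 + m)\<^sup>2)"
      unfolding d_def by (simp add: divide_inverse algebra_simps)
    also have "\<dots> \<le> Q * (1 / (1 + (\<alpha> + \<beta> * \<tau>)))"
      using inverse_one_plus_ge_tangent[OF x m] Q by (rule mult_left_mono)
    also have "\<dots> \<le> qform (H (a + \<tau> *\<^sub>R s)) v"
      using le[OF \<tau>] x by (simp add: field_simps)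
    finally show "Q * (1 / (1 + m) - (\<alpha> - m) * d) + (- Q * \<beta> * d) * \<tau>
        \<le> qform (H (a + \<tau> *\<^sub>R s)) v" .
  qed
  moreover have "Q * (1 / (1 + m) - (\<alpha> - m) * d) + (- Q * \<beta> * d) / 2 = Q / (1 + m)"
    unfolding m_def by (simp add: algebra_simps)
  ultimately show ?thesis using m unfolding m_def by (simp add: field_simps)
qed

lemma avg_hessian_bounds:
  fixes a s v :: "real^'n"
  defines "m \<equiv> M * local_norm H a s / 2"
  shows "qform (avg_hessian a s) v \<le> (1 + m) * qform (H a) v"
    and "qform (avg_hessian a s) v \<le> (1 + m) * qform (H (a + s)) v"
    and "qform (H a) v \<le> (1 + m) * qform (avg_hessian a s) v"
    and "qform (H (a + s)) v \<le> (1 + m) * qform (avg_hessian a s) v"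
proof -
  have m: "0 \<le> m" unfolding m_def using M_pos local_norm_nonneg by simp
  have ln: "M * local_norm H a (p - q) = 2 * m * \<bar>c\<bar>" if "p - q = c *\<^sub>R s" for p q c
    unfolding that local_norm_scaleR m_def by simp
  have d: "a + \<tau> *\<^sub>R s - a = \<tau> *\<^sub>R s" "a + \<tau> *\<^sub>R s - (a + s) = (\<tau> - 1) *\<^sub>R s"
    "a - (a + \<tau> *\<^sub>R s) = (- \<tau>) *\<^sub>R s" "a + s - (a + \<tau> *\<^sub>R s) = (1 - \<tau>) *\<^sub>R s" for \<tau>
    by (simp_all add: algebra_simps)
  note ssc_at = qform_hessian_diff_le[where z = a, of _ v]
  have "qform (H (a + \<tau> *\<^sub>R s)) v \<le> (1 + 0 + 2 * m * \<tau>) * qform (H a) v" if "\<tau> \<in> {0..1}" for \<tau>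
    using that ssc_at[of "a + \<tau> *\<^sub>R s" a a, unfolded ln[OF d(1)]] by (simp add: algebra_simps)
  from qform_avg_hessian_le_scaled[OF this]
  show "qform (avg_hessian a s) v \<le> (1 + m) * qform (H a) v" by (simp add: algebra_simps)
  have "qform (H (a + \<tau> *\<^sub>R s)) v \<le> (1 + 2 * m + - 2 * m * \<tau>) * qform (H (a + s)) v"
    if "\<tau> \<in> {0..1}" for \<tau>
    using that ssc_at[of "a + \<tau> *\<^sub>R s" "a + s" "a + s", unfolded ln[OF d(2)]] by (simp add: algebra_simps)
  from qform_avg_hessian_le_scaled[OF this]
  show "qform (avg_hessian a s) v \<le> (1 + m) * qform (H (a + s)) v" by (simp add: algebra_simps)
  have "qform (H a) v \<le> (1 + 0 + 2 * m * \<tau>) * qform (H (a + \<tau> *\<^sub>R s)) v" if "\<tau> \<in> {0..1}" for \<tau>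
    using that ssc_at[of a "a + \<tau> *\<^sub>R s", unfolded ln[OF d(3)]] by (simp add: algebra_simps)
  from qform_avg_hessian_ge_scaled[OF this qform_hessian_nonneg] m
  show "qform (H a) v \<le> (1 + m) * qform (avg_hessian a s) v" by (simp add: algebra_simps)
  have "qform (H (a + s)) v \<le> (1 + 2 * m + - 2 * m * \<tau>) * qform (H (a + \<tau> *\<^sub>R s)) v"
    if "\<tau> \<in> {0..1}" for \<tau>
    using that ssc_at[of "a + s" "a + \<tau> *\<^sub>R s", unfolded ln[OF d(4)]] by (simp add: algebra_simps)
  from qform_avg_hessian_ge_scaled[OF this qform_hessian_nonneg] m
  show "qform (H (a + s)) v \<le> (1 + m) * qform (avg_hessian a s) v" by (simp add: algebra_simps)
qed

end

section \<open>General Sharpened-BFGS\<close>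

text \<open>Of the greedy choice of \<open>ubar t\<close> only the fact that it is a basis vector, hence nonzero,
  enters the analysis.\<close>

locale sharpened_bfgs = self_concordant_objective f g H mu L M
  for f :: "real^'n \<Rightarrow> real" and g H mu L M +
  fixes x :: "nat \<Rightarrow> real^'n"
    and G J :: "nat \<Rightarrow> real^'n^'n"
    and ubar :: "nat \<Rightarrow> real^'n"
  assumes G0: "G 0 = L *\<^sub>R mat 1"
    and step: "\<And>t. x (Suc t) = x t - matrix_inv (G t) *v g (x t)"
    and Jdef: "\<And>t. J t = integral {0..1}
                   (\<lambda>\<tau>::real. H (x t + \<tau> *\<^sub>R (x (Suc t) - x t)))"
    and udir: "\<And>t. greedy_dir (H (x (Suc t)))
                 ((1 + M * local_norm H (x t) (x (Suc t) - x t) / 2)\<^sup>2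
                    *\<^sub>R BFGS (J t) (G t) (x (Suc t) - x t)) (ubar t)"
    and Gupd: "\<And>t. G (Suc t) = BFGS (H (x (Suc t)))
                 ((1 + M * local_norm H (x t) (x (Suc t) - x t) / 2)\<^sup>2
                    *\<^sub>R BFGS (J t) (G t) (x (Suc t) - x t)) (ubar t)"
    and init: "newton_decrement g H (x 0) \<le> (ln (3/2) / 4) * mu / (M * L)"
    and nonzero: "\<And>t. g (x t) \<noteq> 0"
begin

definition kappa :: real where "kappa = mu / L"

definition decrement :: "nat \<Rightarrow> real" where "decrement t = newton_decrement g H (x t)"

definition corr :: "nat \<Rightarrow> real" where
  "corr t = M * local_norm H (x t) (x (Suc t) - x t) / 2"

definition approx_bounds :: "real \<Rightarrow> nat \<Rightarrow> bool" where
  "approx_bounds E t \<longleftrightarrow> pos_def (G t) \<and> (\<forall>h. qform (H (x t)) h \<le> qform (G t) h)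
     \<and> (\<forall>h. qform (G t) h \<le> E * qform (H (x t)) h)"

lemma kappa_pos: "0 < kappa" and kappa_le_1: "kappa \<le> 1"
  unfolding kappa_def using mu_pos mu_le_L L_pos by auto

lemma decrement_sq: "(decrement t)\<^sup>2 = qform (matrix_inv (H (x t))) (g (x t))"
  and decrement_nonneg: "0 \<le> decrement t"
  using pos_def_qform_nonneg[OF pos_def_matrix_inv[OF pos_def_hessian]]
  unfolding decrement_def newton_decrement_def qform_def by simp_all

lemma corr_nonneg: "0 \<le> corr t"
  unfolding corr_def using M_pos local_norm_nonneg by simp

lemma approx_bounds_mono: "approx_bounds E t \<Longrightarrow> E \<le> E' \<Longrightarrow> approx_bounds E' t"
  unfolding approx_bounds_def using qform_hessian_nonneg by (meson mult_right_mono order_trans)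

lemma G_mult_step:
  assumes "pos_def (G t)" shows "G t *v (x (Suc t) - x t) = - g (x t)"
proof -
  have "x (Suc t) - x t = 0 - matrix_inv (G t) *v g (x t)" using step[of t] by simp
  then have "G t *v (x (Suc t) - x t) = G t *v 0 - G t *v (matrix_inv (G t) *v g (x t))"
    by (simp only: matrix_vector_mult_diff_distrib)
  then show ?thesis using matrix_inv_mult_vec(1)[OF pos_def_invertible[OF assms]] by simp
qed

lemma step_nonzero: "pos_def (G t) \<Longrightarrow> x (Suc t) - x t \<noteq> 0"
  using G_mult_step nonzero by fastforce

lemma corr_le_decrement:
  assumes "approx_bounds E t"
  shows "corr t \<le> M * decrement t / 2"
proof -
  have G: "pos_def (G t)" and le: "\<And>h. qform (H (x t)) h \<le> qform (G t) h"
    using assms unfolding approx_bounds_def by blast+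
  have "x (Suc t) - x t = - (matrix_inv (G t) *v g (x t))" using step[of t] by simp
  then have "(local_norm H (x t) (x (Suc t) - x t))\<^sup>2 = qform (H (x t)) (matrix_inv (G t) *v g (x t))"
    unfolding local_norm_eq using qform_hessian_nonneg by (simp add: qform_uminus_vec)
  also have "\<dots> \<le> (decrement t)\<^sup>2"
    unfolding decrement_sq by (rule qform_mult_matrix_inv_le[OF pos_def_hessian G le])
  finally have "local_norm H (x t) (x (Suc t) - x t) \<le> decrement t"
    using decrement_nonneg by (rule power2_le_imp_le)
  then show ?thesis unfolding corr_def using M_pos by (simp add: mult_left_mono)
qed

lemma J_bounds:
  "qform (J t) v \<le> (1 + corr t) * qform (H (x t)) v"
  "qform (H (x t)) v \<le> (1 + corr t) * qform (J t) v"
  "qform (J t) v \<le> (1 + corr t) * qform (H (x (Suc t))) v"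
  "qform (H (x (Suc t))) v \<le> (1 + corr t) * qform (J t) v"
  using avg_hessian_bounds[where a = "x t" and s = "x (Suc t) - x t" and v = v]
  unfolding Jdef[folded avg_hessian_def] corr_def by simp_all

lemma pos_def_J: "pos_def (J t)"
proof (rule pos_def_if_dominates[OF pos_def_hessian[of "x t"]])
  show "sym_matrix (J t)" unfolding Jdef[folded avg_hessian_def] by (rule sym_matrix_avg_hessian)
  have "0 < 1 + corr t" using corr_nonneg[of t] by linarith
  then show "0 < 1 / (1 + corr t)" by simp
  show "1 / (1 + corr t) * qform (H (x t)) h \<le> qform (J t) h" for h
    using J_bounds(2)[of t h] \<open>0 < 1 + corr t\<close> by (simp add: field_simps)
qed

lemma J_G_sandwich:
  assumes AB: "approx_bounds E t" and E: "1 \<le> E" and E_corr: "E * (1 + corr t) \<le> 3 / (2 * kappa)"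
    and corr: "corr t \<le> kappa / 12"
  defines "c \<equiv> 1 - 2 * kappa / 3"
  shows "qform (J t) h \<le> (1 + c) * qform (G t) h" and "(1 - c) * qform (G t) h \<le> qform (J t) h"
proof -
  have G: "pos_def (G t)" and lo: "\<And>h. qform (H (x t)) h \<le> qform (G t) h"
    and hi: "\<And>h. qform (G t) h \<le> E * qform (H (x t)) h"
    using AB unfolding approx_bounds_def by blast+
  have "qform (J t) h \<le> (1 + corr t) * qform (G t) h"
    using order_trans[OF J_bounds(1) mult_left_mono[OF lo]] corr_nonneg by simp
  also have "\<dots> \<le> (1 + c) * qform (G t) h"
    using corr kappa_le_1 pos_def_qform_nonneg[OF G] unfolding c_def by (intro mult_right_mono) auto
  finally show "qform (J t) h \<le> (1 + c) * qform (G t) h" .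
  have "(1 - c) * qform (G t) h \<le> (1 - c) * (E * ((1 + corr t) * qform (J t) h))"
    using hi[of h] J_bounds(2)[of t h] E kappa_pos unfolding c_def
    by (intro mult_left_mono order_trans[OF hi mult_left_mono]) auto
  also have "\<dots> = ((1 - c) * (E * (1 + corr t))) * qform (J t) h" by simp
  also have "\<dots> \<le> 1 * qform (J t) h"
  proof (rule mult_right_mono)
    have "(1 - c) * (E * (1 + corr t)) \<le> (1 - c) * (3 / (2 * kappa))"
      using E_corr kappa_pos unfolding c_def by (intro mult_left_mono) auto
    then show "(1 - c) * (E * (1 + corr t)) \<le> 1" unfolding c_def using kappa_pos by simp
  qed (rule pos_def_qform_nonneg[OF pos_def_J])
  finally show "(1 - c) * qform (G t) h \<le> qform (J t) h" by simp
qed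

lemma theta_step:
  assumes "approx_bounds E t" "1 \<le> E" "E * (1 + corr t) \<le> 3 / (2 * kappa)" "corr t \<le> kappa / 12"
  shows "theta (J t) (G t) (x (Suc t) - x t) \<le> 1 - 2 * kappa / 3"
  using assms(1) kappa_pos kappa_le_1 J_G_sandwich[OF assms]
  by (intro theta_le pos_def_J) (auto simp: approx_bounds_def)

lemma gradient_next:
  assumes "pos_def (G t)" shows "g (x (Suc t)) = - ((G t - J t) *v (x (Suc t) - x t))"
proof -
  have "g (x (Suc t)) = g (x t) + J t *v (x (Suc t) - x t)"
    using gradient_diff_eq_avg_hessian[of "x t" "x (Suc t) - x t"]
    unfolding Jdef[folded avg_hessian_def] by (simp add: algebra_simps)
  then show ?thesis using G_mult_step[OF assms] by (simp add: matrix_vector_mult_diff_rdistrib)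
qed

lemma decrement_step:
  assumes AB: "approx_bounds E t" and "1 \<le> E" and "E * (1 + corr t) \<le> 3 / (2 * kappa)"
    and corr: "corr t \<le> kappa / 12"
  shows "decrement (Suc t) \<le> (1 - kappa / 2) * decrement t"
proof -
  define c where "c = 1 - 2 * kappa / 3"
  define s where "s = x (Suc t) - x t"
  define Ji where "Ji = matrix_inv (J t)"
  have G: "pos_def (G t)" using AB unfolding approx_bounds_def by blast
  have m: "0 \<le> corr t" by (rule corr_nonneg)
  have c: "0 \<le> c" "c < 1" unfolding c_def using kappa_pos kappa_le_1 by auto
  have A1: "(decrement (Suc t))\<^sup>2 \<le> (1 + corr t) * qform Ji (g (x (Suc t)))"
    unfolding decrement_sq Ji_def
    by (rule qform_matrix_inv_antimono[OF pos_def_J pos_def_hessian]) (use m J_bounds(3) in auto)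
  have A2: "qform Ji (g (x (Suc t))) \<le> c\<^sup>2 * qform Ji (G t *v s)"
    unfolding gradient_next[OF G, folded s_def] qform_uminus_vec Ji_def
    by (rule qform_matrix_inv_residual_le[OF pos_def_J G c])
      (use J_G_sandwich[OF assms] in \<open>simp_all add: c_def\<close>)
  have A3: "qform Ji (G t *v s) \<le> (1 + corr t) * (decrement t)\<^sup>2"
    unfolding G_mult_step[OF G, folded s_def] qform_uminus_vec decrement_sq Ji_def
    by (rule qform_matrix_inv_antimono[OF pos_def_hessian pos_def_J]) (use m J_bounds(2) in auto)
  have "(decrement (Suc t))\<^sup>2 \<le> (1 + corr t) * (c\<^sup>2 * ((1 + corr t) * (decrement t)\<^sup>2))"
    using m order_trans[OF A1 mult_left_mono[OF order_trans[OF A2 mult_left_mono[OF A3]]]] by simp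
  also have "\<dots> = ((1 + corr t) * c * decrement t)\<^sup>2" by algebra
  finally have "(decrement (Suc t))\<^sup>2 \<le> ((1 + corr t) * c * decrement t)\<^sup>2" .
  moreover have "0 \<le> (1 + corr t) * c * decrement t"
    using m c(1) decrement_nonneg[of t] by simp
  ultimately have "decrement (Suc t) \<le> (1 + corr t) * c * decrement t"
    by (rule power2_le_imp_le)
  also have "\<dots> \<le> (1 - kappa / 2) * decrement t"
  proof (rule mult_right_mono[OF _ decrement_nonneg])
    have "c * corr t \<le> corr t" using m c by (simp add: mult_left_le_one_le)
    then have "(1 + corr t) * c \<le> c + corr t" by (simp add: algebra_simps)
    then show "(1 + corr t) * c \<le> 1 - kappa / 2" using corr kappa_pos unfolding c_def by linarith
  qed
  finally show ?thesis .
qed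

lemma ubar_nonzero: "ubar t \<noteq> 0"
  using udir[of t] unfolding greedy_dir_def by (auto simp: axis_eq_0_iff)

lemma BFGS_J_bounds:
  assumes AB: "approx_bounds E t" and E: "1 \<le> E"
  defines "B \<equiv> BFGS (J t) (G t) (x (Suc t) - x t)"
  shows "1 / (1 + corr t) * qform (J t) h \<le> qform B h"
    and "qform B h \<le> E * (1 + corr t) * qform (J t) h"
    and "sym_matrix B"
proof -
  have G: "pos_def (G t)" and lo: "\<And>h. qform (H (x t)) h \<le> qform (G t) h"
    and hi: "\<And>h. qform (G t) h \<le> E * qform (H (x t)) h"
    using AB unfolding approx_bounds_def by blast+
  have m: "0 \<le> corr t" by (rule corr_nonneg)
  have Jlo: "1 / (1 + corr t) * qform (J t) h \<le> qform (G t) h" for h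
  proof -
    have "qform (J t) h \<le> (1 + corr t) * qform (G t) h"
      using order_trans[OF J_bounds(1) mult_left_mono[OF lo]] m by simp
    then show ?thesis using m by (simp add: field_simps add_nonneg_pos)
  qed
  have Ghi: "qform (G t) h \<le> E * (1 + corr t) * qform (J t) h" for h
    using order_trans[OF hi mult_left_mono[OF J_bounds(2)]] E by (simp add: mult.assoc)
  have "0 < 1 / (1 + corr t)" "1 / (1 + corr t) \<le> 1" "1 \<le> E * (1 + corr t)"
    using m E mult_mono[of 1 E 1 "1 + corr t"] by (simp_all add: add_nonneg_pos)
  note BF = BFGS_sandwich[OF pos_def_J _ step_nonzero[OF G] this Jlo Ghi, folded B_def]
  show "1 / (1 + corr t) * qform (J t) h \<le> qform B h" "qform B h \<le> E * (1 + corr t) * qform (J t) h"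
    and "sym_matrix B"
    using BF G by (auto simp: pos_def_def)
qed

lemma approx_bounds_step:
  assumes AB: "approx_bounds E t" and E: "1 \<le> E"
  shows "approx_bounds (E * (1 + corr t) ^ 4) (Suc t)"
proof -
  define m where "m = corr t"
  define B where "B = BFGS (J t) (G t) (x (Suc t) - x t)"
  define Hn where "Hn = H (x (Suc t))"
  define Gh where "Gh = (1 + m)\<^sup>2 *\<^sub>R B"
  note B = BFGS_J_bounds[OF AB E, folded B_def m_def]
  have m: "0 \<le> m" unfolding m_def by (rule corr_nonneg)
  have Gh_lo: "1 * qform Hn h \<le> qform Gh h" for h
  proof -
    have "qform Hn h \<le> (1 + m)\<^sup>2 * (1 / (1 + m) * qform (J t) h)"
      using J_bounds(4) m unfolding Hn_def m_def by (simp add: power2_eq_square add_nonneg_pos)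
    also have "\<dots> \<le> (1 + m)\<^sup>2 * qform B h" by (intro mult_left_mono B(1)) simp
    finally show ?thesis unfolding Gh_def qform_scaleR by simp
  qed
  have Gh_hi: "qform Gh h \<le> E * (1 + m) ^ 4 * qform Hn h" for h
  proof -
    have "qform Gh h \<le> (1 + m)\<^sup>2 * (E * (1 + m) * qform (J t) h)"
      unfolding Gh_def qform_scaleR by (intro mult_left_mono B(2)) simp
    also have "\<dots> \<le> (1 + m)\<^sup>2 * (E * (1 + m) * ((1 + m) * qform Hn h))"
      using J_bounds(3) m E unfolding Hn_def m_def by (intro mult_left_mono) simp_all
    finally show ?thesis by (simp add: power2_eq_square power4_eq_xxxx ac_simps)
  qed
  have E4: "1 \<le> E * (1 + m) ^ 4"
    using m E one_le_power[of "1 + m" 4] mult_mono[of 1 E 1 "(1 + m) ^ 4"] by simp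
  have sGh: "sym_matrix Gh" unfolding Gh_def by (rule sym_matrix_scaleR[OF B(3)])
  note BF = BFGS_sandwich[OF pos_def_hessian[of "x (Suc t)", folded Hn_def]
      sGh ubar_nonzero zero_less_one order_refl E4 Gh_lo Gh_hi]
  have "G (Suc t) = BFGS Hn Gh (ubar t)"
    unfolding Gupd Hn_def Gh_def B_def m_def corr_def Jdef ..
  then show ?thesis unfolding approx_bounds_def using BF by (simp add: Hn_def m_def)
qed

definition rho :: real where "rho = 1 - kappa / 2"

text \<open>Each step multiplies the sandwich constant by at most
  \<open>(1 + corr n)\<^sup>4 \<le> exp (2 M decrement n) \<le> exp (2 M decrement 0 rho\<^sup>n)\<close>.\<close>

definition Ebound :: "nat \<Rightarrow> real" where
  "Ebound n = exp (2 * M * decrement 0 * (\<Sum>i<n. rho ^ i)) / kappa"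

lemma rho_pos: "0 < rho" and rho_less_1: "rho < 1"
  unfolding rho_def using kappa_pos kappa_le_1 by auto

lemma M_decrement_0_le: "M * decrement 0 \<le> ln (3/2) / 4 * kappa"
proof -
  have "M * decrement 0 \<le> M * (ln (3/2) / 4 * mu / (M * L))"
    using init M_pos unfolding decrement_def by (intro mult_left_mono) simp_all
  also have "\<dots> = ln (3/2) / 4 * kappa" unfolding kappa_def using M_pos by simp
  finally show ?thesis .
qed

lemma Ebound_ge_1: "1 \<le> Ebound n"
proof -
  have "1 \<le> exp (2 * M * decrement 0 * (\<Sum>i<n. rho ^ i))"
    using M_pos decrement_nonneg rho_pos by (simp add: sum_nonneg)
  moreover have "1 \<le> 1 / kappa" using kappa_pos kappa_le_1 by simp
  ultimately show ?thesis
    unfolding Ebound_def using mult_mono[of 1 "exp _" 1 "1 / kappa"] by simp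
qed

lemma Ebound_le: "Ebound n \<le> 3 / (2 * kappa)"
proof -
  have "(\<Sum>i<n. rho ^ i) = (1 - rho ^ n) / (1 - rho)"
    using rho_less_1 by (simp add: sum_gp_strict)
  also have "\<dots> \<le> 2 / kappa"
    using rho_pos rho_less_1 unfolding rho_def by (simp add: divide_right_mono)
  finally have "2 * M * decrement 0 * (\<Sum>i<n. rho ^ i) \<le> 2 * M * decrement 0 * (2 / kappa)"
    using M_pos decrement_nonneg by (intro mult_left_mono) simp_all
  also have "\<dots> \<le> ln (3/2)"
    using M_decrement_0_le kappa_pos by (simp add: field_simps)
  finally have "exp (2 * M * decrement 0 * (\<Sum>i<n. rho ^ i)) \<le> 3 / 2"
    by (metis exp_le_cancel_iff exp_ln order_trans less_eq_real_def zero_less_divide_iff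
        zero_less_numeral)
  then have "Ebound n \<le> (3 / 2) / kappa"
    unfolding Ebound_def using kappa_pos by (intro divide_right_mono) simp_all
  then show ?thesis by simp
qed

lemma Ebound_Suc: "Ebound (Suc n) = Ebound n * exp (2 * M * decrement 0 * rho ^ n)"
  unfolding Ebound_def by (simp add: distrib_left exp_add)

lemma approx_bounds_0: "approx_bounds (Ebound 0) 0"
proof -
  have qG: "qform (G 0) h = L * (norm h)\<^sup>2" for h unfolding G0 qform_scaleR qform_mat_1 ..
  have "qform (G 0) h \<le> 1 / kappa * qform (H (x 0)) h" for h
  proof -
    have "qform (G 0) h = 1 / kappa * (mu * (norm h)\<^sup>2)" unfolding qG kappa_def using mu_pos by simp
    also have "\<dots> \<le> 1 / kappa * qform (H (x 0)) h"
      using qform_hessian_ge kappa_pos by (intro mult_left_mono) simp_all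
    finally show ?thesis .
  qed
  moreover have "pos_def (G 0)"
    unfolding pos_def_def G0 using sym_matrix_scaleR[OF sym_matrix_mat_1] qG L_pos G0 by simp
  ultimately show ?thesis
    unfolding approx_bounds_def Ebound_def using qform_hessian_le qG by simp
qed

lemma corr_step_bounds:
  assumes "approx_bounds (Ebound n) n" and "decrement n \<le> rho ^ n * decrement 0"
  shows "corr n \<le> kappa / 12" and "Ebound n * (1 + corr n) ^ 4 \<le> Ebound (Suc n)"
    and "Ebound n * (1 + corr n) \<le> 3 / (2 * kappa)"
proof -
  have "M * decrement n / 2 \<le> M * (rho ^ n * decrement 0) / 2"
    using assms(2) M_pos by (intro divide_right_mono mult_left_mono) simp_all
  with corr_le_decrement[OF assms(1)] have "corr n \<le> M * (rho ^ n * decrement 0) / 2"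
    by linarith
  also have "\<dots> = M * decrement 0 * rho ^ n / 2" by simp
  finally have c: "corr n \<le> M * decrement 0 * rho ^ n / 2" .
  have "M * decrement 0 * rho ^ n \<le> M * decrement 0"
    using M_pos decrement_nonneg rho_pos rho_less_1 by (simp add: mult_left_le power_le_one)
  moreover have "ln (3/2::real) \<le> 1/2" using ln_le_minus_one[of "3/2::real"] by simp
  then have "ln (3/2) / 4 * kappa \<le> 1/8 * kappa" using kappa_pos by (intro mult_right_mono) simp_all
  ultimately show "corr n \<le> kappa / 12"
    using c M_decrement_0_le kappa_pos by linarith
  have "(1 + corr n) ^ 4 \<le> exp (corr n) ^ 4"
    using corr_nonneg by (intro power_mono) (simp_all add: add.commute exp_ge_add_one_self)
  also have "\<dots> = exp (4 * corr n)" by (simp add: exp_of_nat_mult[symmetric])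
  also have "\<dots> \<le> exp (2 * M * decrement 0 * rho ^ n)" using c by (simp add: algebra_simps)
  finally show E4: "Ebound n * (1 + corr n) ^ 4 \<le> Ebound (Suc n)"
    unfolding Ebound_Suc using order_trans[OF zero_le_one Ebound_ge_1] by (rule mult_left_mono)
  have "Ebound n * (1 + corr n) \<le> Ebound n * (1 + corr n) ^ 4"
    using order_trans[OF zero_le_one Ebound_ge_1] corr_nonneg
    by (intro mult_left_mono) (simp_all add: power_increasing[of 1 4, simplified])
  then show "Ebound n * (1 + corr n) \<le> 3 / (2 * kappa)"
    using E4 Ebound_le[of "Suc n"] by linarith
qed

lemma approx_bounds_invariant: "approx_bounds (Ebound n) n \<and> decrement n \<le> rho ^ n * decrement 0"
proof (induction n)
  case 0
  show ?case using approx_bounds_0 by simp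
next
  case (Suc n)
  then have AB: "approx_bounds (Ebound n) n" and dec: "decrement n \<le> rho ^ n * decrement 0" by auto
  note small = corr_step_bounds[OF AB dec]
  have "decrement (Suc n) \<le> rho * decrement n"
    using decrement_step[OF AB Ebound_ge_1 small(3,1)] unfolding rho_def .
  also have "\<dots> \<le> rho ^ Suc n * decrement 0" using dec rho_pos by (simp add: mult_left_mono)
  finally show ?case
    using approx_bounds_mono[OF approx_bounds_step[OF AB Ebound_ge_1] small(2)] by simp
qed

lemma convergence:
  "theta (J t) (G t) (x (Suc t) - x t) \<le> 1 - 2 * mu / (3 * L)
     \<and> newton_decrement g H (x t) \<le> (1 - mu / (2 * L)) ^ t * newton_decrement g H (x 0)"
proof -
  note AB = conjunct1[OF approx_bounds_invariant[of t]]
  note small = corr_step_bounds[OF AB conjunct2[OF approx_bounds_invariant[of t]]]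
  note th = theta_step[OF AB Ebound_ge_1 small(3,1)]
  have "1 - 2 * kappa / 3 = 1 - 2 * mu / (3 * L)" "rho = 1 - mu / (2 * L)"
    unfolding kappa_def rho_def by simp_all
  with th approx_bounds_invariant[of t] show ?thesis unfolding decrement_def by metis
qed

end

theorem theorem3:
  fixes f :: "real^'n \<Rightarrow> real"
    and g :: "real^'n \<Rightarrow> real^'n"
    and H :: "real^'n \<Rightarrow> real^'n^'n"
    and mu L M :: real
    and x :: "nat \<Rightarrow> real^'n"
    and G J :: "nat \<Rightarrow> real^'n^'n"
    and ubar :: "nat \<Rightarrow> real^'n"
  assumes grad: "\<And>y. (f has_derivative (\<lambda>h. g y \<bullet> h)) (at y)"
    and hess: "\<And>y. (g has_derivative (\<lambda>h. H y *v h)) (at y)"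
    and mu_pos: "0 < mu" and mu_le_L: "mu \<le> L" and M_pos: "0 < M"
    and sconv: "strongly_convex mu f"
    and lip: "L-lipschitz_on UNIV g"
    and ssc: "strongly_self_concordant M H"
    and G0: "G 0 = L *\<^sub>R mat 1"
    and step: "\<And>t. x (Suc t) = x t - matrix_inv (G t) *v g (x t)"
    and Jdef: "\<And>t. J t = integral {0..1}
                   (\<lambda>\<tau>::real. H (x t + \<tau> *\<^sub>R (x (Suc t) - x t)))"
    and udir: "\<And>t. greedy_dir (H (x (Suc t)))
                 ((1 + M * local_norm H (x t) (x (Suc t) - x t) / 2)\<^sup>2
                    *\<^sub>R BFGS (J t) (G t) (x (Suc t) - x t)) (ubar t)"
    and Gupd: "\<And>t. G (Suc t) = BFGS (H (x (Suc t)))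
                 ((1 + M * local_norm H (x t) (x (Suc t) - x t) / 2)\<^sup>2
                    *\<^sub>R BFGS (J t) (G t) (x (Suc t) - x t)) (ubar t)"
    and init: "newton_decrement g H (x 0) \<le> (ln (3/2) / 4) * mu / (M * L)"
    and nonzero: "\<And>t. g (x t) \<noteq> 0"
  shows "\<forall>t. theta (J t) (G t) (x (Suc t) - x t) \<le> 1 - 2 * mu / (3 * L)
           \<and> newton_decrement g H (x t) \<le> (1 - mu / (2 * L)) ^ t * newton_decrement g H (x 0)"
proof -
  interpret sharpened_bfgs f g H mu L M x G J ubar
    by unfold_locales (fact assms)+
  show ?thesis using convergence by blast
qed

end
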